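(* The number $\zeta=2\cdot\sum_{l\geq 1}3^{-l!}$ belongs to the Cantor middle third set, and for every positive integer $k$: \begin{align*} \lambda_{k,j}(\zeta)&=\frac{1}{j-1}, \qquad 1\leq j\leq k+1,\\ \widehat{\lambda}_{k,1}(\zeta)&=\frac{1}{k},\\ \widehat{\lambda}_{k,j}(\zeta)&=0, \qquad 2\leq j\leq k+1. \end{align*}
   Context: The Cantor middle third set is the set of numbers in $[0,1]$ that admit a base-$3$ expansion without the digit $1$. For $\underline{\zeta}=(\zeta_1,\ldots,\zeta_k)\in\mathbb{R}^k$ and $1\leq j\leq k+1$, $\lambda_{k,j}(\underline{\zeta})$ (resp. $\widehat{\lambda}_{k,j}(\underline{\zeta})$) is the supremum of all $\eta\in\mathbb{R}$ such that the system $|x|\leq X$, $\max_{1\leq i\leq k}|\zeta_i x-y_i|\leq X^{-\eta}$ has at least $j$ linearly independent solutions $(x,y_1,\ldots,y_k)\in\mathbb{Z}^{k+1}$ for arbitrarily large real $X$ (resp. for all sufficiently large real $X$). For a real number $\zeta$ one writes $\lambda_{k,j}(\zeta):=\lambda_{k,j}(\zeta,\zeta^2,\ldots,\zeta^k)$ and $\widehat{\lambda}_{k,j}(\zeta):=\widehat{\lambda}_{k,j}(\zeta,\zeta^2,\ldots,\zeta^k)$. Convention: $1/0=\infty$. *)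

theory Defs
  imports "HOL-Analysis.Analysis" "HOL-Library.Extended_Real"
begin

definition cantor_set :: "real set" where
  "cantor_set = {x. 0 \<le> x \<and> x \<le> 1 \<and>
     (\<exists>d :: nat \<Rightarrow> nat. (\<forall>i. d i = 0 \<or> d i = 2) \<and>
        x = (\<Sum>i. real (d i) / 3 ^ (Suc i)))}"

text \<open>Integer points (x, y_1, ..., y_k) of Z^{k+1} are encoded as functions
  v :: nat => int with v 0 = x, v i = y_i (1 <= i <= k), v i = 0 for i > k.
  A real vector (zeta_1,...,zeta_k) is encoded as zeta :: nat => real (indices 1..k used).\<close>
definition approx_sol :: "nat \<Rightarrow> (nat \<Rightarrow> real) \<Rightarrow> real \<Rightarrow> real \<Rightarrow> (nat \<Rightarrow> int) \<Rightarrow> bool" where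
  "approx_sol k \<zeta> X \<eta> v \<longleftrightarrow> (\<forall>i>k. v i = 0) \<and> \<bar>real_of_int (v 0)\<bar> \<le> X \<and>
     (\<forall>i\<in>{1..k}. \<bar>\<zeta> i * of_int (v 0) - of_int (v i)\<bar> \<le> X powr (- \<eta>))"

definition lin_indep_int :: "nat \<Rightarrow> nat \<Rightarrow> (nat \<Rightarrow> nat \<Rightarrow> int) \<Rightarrow> bool" where
  "lin_indep_int k j V \<longleftrightarrow> (\<forall>c :: nat \<Rightarrow> real.
      (\<forall>t\<le>k. (\<Sum>m<j. c m * of_int (V m t)) = 0) \<longrightarrow> (\<forall>m<j. c m = 0))"

definition has_indep_sols :: "nat \<Rightarrow> nat \<Rightarrow> (nat \<Rightarrow> real) \<Rightarrow> real \<Rightarrow> real \<Rightarrow> bool" where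
  "has_indep_sols k j \<zeta> X \<eta> \<longleftrightarrow>
     (\<exists>V. (\<forall>m<j. approx_sol k \<zeta> X \<eta> (V m)) \<and> lin_indep_int k j V)"

definition lambda_kj :: "nat \<Rightarrow> nat \<Rightarrow> (nat \<Rightarrow> real) \<Rightarrow> ereal" where
  "lambda_kj k j \<zeta> = Sup {ereal \<eta> | \<eta>. \<exists>\<^sub>F X in at_top. has_indep_sols k j \<zeta> X \<eta>}"

definition lambda_hat_kj :: "nat \<Rightarrow> nat \<Rightarrow> (nat \<Rightarrow> real) \<Rightarrow> ereal" where
  "lambda_hat_kj k j \<zeta> = Sup {ereal \<eta> | \<eta>. \<forall>\<^sub>F X in at_top. has_indep_sols k j \<zeta> X \<eta>}"

definition veronese :: "real \<Rightarrow> nat \<Rightarrow> real" where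
  "veronese z = (\<lambda>i. z ^ i)"

end

theory Submission
  imports Defs "Jordan_Normal_Form.Determinant"
begin

text \<open>
  The number \<open>\<zeta> = 2 \<Sum>\<^sub>l 3\<^sup>-\<^sup>l\<^sup>!\<close> is a Liouville-type number: its partial sums
  \<open>p\<^sub>n / q\<^sub>n\<close> with \<open>q\<^sub>n = 3\<^sup>n\<^sup>!\<close> are reduced fractions and
  \<open>\<bar>\<zeta> - p\<^sub>n / q\<^sub>n\<bar> \<le> 3 / q\<^sub>n\<^sub>+\<^sub>1 = 3 / q\<^sub>n\<^sup>n\<^sup>+\<^sup>1\<close>.

  For every \<open>z \<in> (0, 1]\<close>, \<open>j\<close> independent integer vectors with
  \<open>\<bar>x\<bar> \<le> X\<close> and error \<open>\<delta>\<close> span a nonsingular integer \<open>j \<times> j\<close> minor, whose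
  determinant is at most a constant times \<open>X \<delta>\<^sup>j\<^sup>-\<^sup>1\<close> after a column operation; hence
  \<open>\<lambda>\<^sub>k\<^sub>,\<^sub>j \<le> 1 / (j - 1)\<close>. For the uniform exponents, take
  \<open>X \<le> q\<^sub>n\<^sub>+\<^sub>1 / (6 k q\<^sub>n)\<close>: an approximation with error below \<open>1 / (2 q\<^sub>n)\<close> must
  then be exact for \<open>p\<^sub>n / q\<^sub>n\<close>, which forces \<open>q\<^sub>n\<^sup>k\<close> to divide \<open>x\<close> (so \<open>x = 0\<close>
  if moreover \<open>X < q\<^sub>n\<^sup>k\<close>) and makes any two such vectors proportional.

  Dirichlet's box principle gives \<open>\<lambda>\<^sub>k\<^sub>,\<^sub>1 \<ge> 1 / k\<close> uniformly, and the
  unit vectors give \<open>\<lambda>\<^sub>k\<^sub>,\<^sub>j \<ge> 0\<close>. For \<open>\<lambda>\<^sub>k\<^sub>,\<^sub>j \<ge> 1 / (j - 1)\<close> take, with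
  \<open>T = q\<^sub>n\<^sup>n\<close>, the \<open>j\<close> integer vectors \<open>q\<^sub>n\<^sup>k T\<^sup>a (1, r, \<dots>, r\<^sup>k)\<close> with
  \<open>r = p\<^sub>n\<^sub>+\<^sub>1 / q\<^sub>n\<^sub>+\<^sub>1\<close> and \<open>a < j\<close>, truncated to integers: they have size \<open>q\<^sub>n\<^sup>k T\<^sup>j\<^sup>-\<^sup>1\<close>, error about
  \<open>q\<^sub>n\<^sup>k / T\<close>, and a triangular structure that makes them independent.
\<close>

section \<open>Elementary estimates\<close>

lemma abs_power_diff_le:
  fixes z w :: real
  assumes "0 \<le> z" "z \<le> 1" "0 \<le> w" "w \<le> 1"
  shows "\<bar>z ^ i - w ^ i\<bar> \<le> real i * \<bar>z - w\<bar>"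
proof (induction i)
  case (Suc i)
  have "z ^ Suc i - w ^ Suc i = z * (z ^ i - w ^ i) + w ^ i * (z - w)"
    by (simp add: algebra_simps)
  hence "\<bar>z ^ Suc i - w ^ Suc i\<bar> \<le> \<bar>z\<bar> * \<bar>z ^ i - w ^ i\<bar> + \<bar>w ^ i\<bar> * \<bar>z - w\<bar>"
    by (metis abs_mult abs_triangle_ineq)
  also have "\<dots> \<le> 1 * \<bar>z ^ i - w ^ i\<bar> + 1 * \<bar>z - w\<bar>"
    using assms by (intro add_mono mult_right_mono) (auto simp: power_le_one abs_le_iff)
  also have "\<dots> \<le> real (Suc i) * \<bar>z - w\<bar>"
    using Suc by (simp add: algebra_simps)
  finally show ?case .
qed simp

lemma abs_le_of_approximation:
  fixes z x y X \<delta> :: real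
  assumes "0 \<le> z" "z \<le> 1" "\<bar>x\<bar> \<le> X" "\<bar>z ^ t * x - y\<bar> \<le> \<delta>"
  shows "\<bar>y\<bar> \<le> X + \<delta>"
proof -
  have "\<bar>z ^ t * x\<bar> \<le> 1 * \<bar>x\<bar>"
    unfolding abs_mult using assms by (intro mult_right_mono) (auto simp: power_le_one)
  thus ?thesis using assms by linarith
qed

lemma power_ratio_le:
  fixes z :: real
  assumes "0 < z" "z \<le> 1" "a \<le> k"
  shows "z ^ b / z ^ a \<le> 1 / z ^ k"
proof -
  have "z ^ b / z ^ a \<le> 1 / z ^ a"
    using assms by (intro divide_right_mono) (auto simp: power_le_one)
  also have "\<dots> \<le> 1 / z ^ k"
    using assms by (intro divide_left_mono power_decreasing) auto
  finally show ?thesis .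
qed

lemma powr_error_le:
  fixes q C \<eta> :: real
  assumes q: "q \<ge> 1" and C: "C \<le> q" and j: "j \<ge> 1"
    and margin: "real k * (1 + \<eta>) + 1 \<le> real n * (1 - \<eta> * (real j - 1))"
  shows "C * q ^ k / q ^ n \<le> (q ^ (k + n * (j - 1))) powr (- \<eta>)"
proof -
  define E where "E = real n * (1 - \<eta> * (real j - 1)) - real k * (1 + \<eta>)"
  have "(q ^ (k + n * (j - 1))) powr (- \<eta>) = q powr (- \<eta> * (real k + real n * (real j - 1)))"
    using q j by (simp add: powr_realpow[symmetric] powr_powr of_nat_diff mult.commute)
  also have "- \<eta> * (real k + real n * (real j - 1)) = (real k - real n) + E"
    by (simp add: E_def algebra_simps)
  also have "q powr ((real k - real n) + E) = q ^ k / q ^ n * q powr E"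
    using q by (simp add: powr_add powr_diff powr_realpow)
  finally have eq: "(q ^ (k + n * (j - 1))) powr (- \<eta>) = q ^ k / q ^ n * q powr E" .
  have "C \<le> q powr 1" using C q by simp
  also have "\<dots> \<le> q powr E" using q margin by (intro powr_mono) (auto simp: E_def)
  finally have "C * q ^ k / q ^ n \<le> q powr E * q ^ k / q ^ n"
    using q by (intro divide_right_mono mult_right_mono) auto
  thus ?thesis unfolding eq by (simp add: mult_ac)
qed

lemma binomial_expansion_scaled:
  fixes p T :: real
  assumes "T > 0"
  shows "T ^ a * (p * T + 2) ^ i / T ^ i
    = (\<Sum>s\<le>i. real (i choose s) * 2 ^ s * p ^ (i - s) * (T ^ a / T ^ s))"
proof -
  have "(p * T + 2) ^ i = (\<Sum>s\<le>i. real (i choose s) * 2 ^ s * (p * T) ^ (i - s))"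
    by (subst add.commute) (simp add: binomial_ring)
  also have "\<dots> * T ^ a / T ^ i = (\<Sum>s\<le>i. real (i choose s) * 2 ^ s * p ^ (i - s) * (T ^ a / T ^ s))"
    unfolding sum_distrib_right sum_divide_distrib
  proof (rule sum.cong)
    fix s assume "s \<in> {..i}"
    hence "T ^ i = T ^ (i - s) * T ^ s" by (simp add: power_add[symmetric])
    thus "real (i choose s) * 2 ^ s * (p * T) ^ (i - s) * T ^ a / T ^ i
        = real (i choose s) * 2 ^ s * p ^ (i - s) * (T ^ a / T ^ s)"
      using assms by (simp add: power_mult_distrib field_simps)
  qed simp
  finally show ?thesis by (simp add: mult.commute)
qed

text \<open>Each dropped term (\<open>s > a\<close>) of the expansion above is at most its binomial term
  times \<open>1 / T\<close>.\<close>
lemma binomial_truncation_error: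
  fixes p T :: real
  assumes p: "p \<ge> 0" and T: "T \<ge> 1"
  shows "\<bar>T ^ a * (p * T + 2) ^ i / T ^ i
      - (\<Sum>s\<le>a. real (i choose s) * 2 ^ s * p ^ (i - s) * T ^ (a - s))\<bar> \<le> (p + 2) ^ i / T"
proof -
  define b where "b s = real (i choose s) * 2 ^ s * p ^ (i - s)" for s
  define g where "g s = b s * (T ^ a / T ^ s)" for s
  have b: "b s \<ge> 0" for s using p by (simp add: b_def)
  have "T > 0" using T by simp
  have "T ^ a * (p * T + 2) ^ i / T ^ i = (\<Sum>s\<le>i. g s)"
    unfolding binomial_expansion_scaled[OF \<open>T > 0\<close>] by (simp add: g_def b_def)
  also have "\<dots> = (\<Sum>s\<le>i + a. g s)"
    by (rule sum.mono_neutral_left) (auto simp: g_def b_def)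
  also have "\<dots> = (\<Sum>s\<le>a. g s) + (\<Sum>s\<in>{a<..i + a}. g s)"
    by (subst sum.union_disjoint[symmetric]) (auto intro: sum.cong)
  also have "(\<Sum>s\<le>a. g s) = (\<Sum>s\<le>a. b s * T ^ (a - s))"
    using T by (intro sum.cong) (auto simp: g_def power_diff)
  finally have err: "T ^ a * (p * T + 2) ^ i / T ^ i - (\<Sum>s\<le>a. b s * T ^ (a - s))
      = (\<Sum>s\<in>{a<..i + a}. g s)" by simp
  have "(\<Sum>s\<in>{a<..i + a}. g s) \<le> (\<Sum>s\<in>{a<..i + a}. b s / T)"
  proof (rule sum_mono)
    fix s assume "s \<in> {a<..i + a}"
    hence "T ^ a / T ^ s = 1 / T ^ (s - a)" using T by (simp add: power_diff)
    also have "\<dots> \<le> 1 / T"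
      using T \<open>s \<in> _\<close> by (intro divide_left_mono) (auto simp: power_increasing[of 1, simplified])
    finally show "g s \<le> b s / T" using b[of s] by (simp add: g_def mult_left_mono divide_inverse)
  qed
  also have "\<dots> \<le> (\<Sum>s\<le>i + a. b s / T)"
    using b T by (intro sum_mono2) auto
  also have "\<dots> = (\<Sum>s\<le>i. b s) / T"
    by (subst sum_divide_distrib, rule sum.mono_neutral_right) (auto simp: b_def)
  also have "(\<Sum>s\<le>i. b s) = (p + 2) ^ i"
    unfolding b_def by (subst add.commute) (simp add: binomial_ring)
  finally have "(\<Sum>s\<in>{a<..i + a}. g s) \<le> (p + 2) ^ i / T" .
  moreover have "(\<Sum>s\<in>{a<..i + a}. g s) \<ge> 0"
    using b T by (intro sum_nonneg) (simp add: g_def)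
  ultimately show ?thesis unfolding b_def[symmetric] err by simp
qed

lemma sum_triangle_swap:
  fixes j :: nat
  shows "(\<Sum>a<j. \<Sum>s\<le>a. f a s) = (\<Sum>s<j. \<Sum>a=s..<j. f a s)"
proof (induction j)
  case (Suc j)
  have "(\<Sum>s<Suc j. \<Sum>a=s..<Suc j. f a s) = (\<Sum>s<j. \<Sum>a=s..<Suc j. f a s) + f j j"
    by simp
  also have "(\<Sum>s<j. \<Sum>a=s..<Suc j. f a s) = (\<Sum>s<j. \<Sum>a=s..<j. f a s) + (\<Sum>s<j. f j s)"
    by (simp add: sum.distrib[symmetric] add.commute)
  finally show ?case using Suc by (simp add: lessThan_Suc_atMost[symmetric] add.assoc)
qed simp

lemma triangular_system_eq_0:
  fixes u :: "nat \<Rightarrow> nat \<Rightarrow> real" and d :: "nat \<Rightarrow> real"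
  assumes eq: "\<And>t. t < j \<Longrightarrow> (\<Sum>s<j. u s t * d s) = 0"
    and upper: "\<And>s t. t < s \<Longrightarrow> u s t = 0" and diag: "\<And>t. u t t \<noteq> 0"
  shows "s < j \<Longrightarrow> d s = 0"
proof (induction s rule: less_induct)
  case (less s)
  have "(\<Sum>s'<j. u s' s * d s') = (\<Sum>s'<j. if s' = s then u s s * d s else 0)"
    using less upper by (intro sum.cong) (auto simp: nat_neq_iff)
  also have "\<dots> = u s s * d s" using less.prems by simp
  finally show ?case using eq[OF less.prems] diag[of s] by simp
qed

lemma frequently_at_topI:
  assumes "\<And>N. \<exists>X\<ge>N. P X"
  shows "\<exists>\<^sub>F X in at_top. P (X::real)"
  unfolding frequently_def eventually_at_top_linorder using assms by (metis order.refl)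

lemma Sup_ereal_eq_threshold:
  assumes below: "\<And>\<eta>. \<eta> < L \<Longrightarrow> P \<eta>" and above: "\<And>\<eta>. \<eta> > L \<Longrightarrow> \<not> P \<eta>"
  shows "Sup {ereal \<eta> | \<eta>. P \<eta>} = ereal L"
proof (rule antisym)
  show "Sup {ereal \<eta> | \<eta>. P \<eta>} \<le> ereal L"
  proof (rule Sup_least)
    fix x assume "x \<in> {ereal \<eta> | \<eta>. P \<eta>}"
    then obtain \<eta> where "x = ereal \<eta>" "P \<eta>" by auto
    thus "x \<le> ereal L" using above by (cases "\<eta> \<le> L") auto
  qed
  show "ereal L \<le> Sup {ereal \<eta> | \<eta>. P \<eta>}"
  proof (rule ccontr)
    assume "\<not> ?thesis"
    hence "Sup {ereal \<eta> | \<eta>. P \<eta>} < ereal L" by simp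
    then obtain r where r: "Sup {ereal \<eta> | \<eta>. P \<eta>} < ereal r" "ereal r < ereal L"
      using ereal_dense2 by blast
    hence "ereal r \<le> Sup {ereal \<eta> | \<eta>. P \<eta>}"
      using below by (intro Sup_upper) auto
    with r(1) show False by simp
  qed
qed

lemma Sup_ereal_eq_PInf:
  assumes "\<And>\<eta>. P \<eta>"
  shows "Sup {ereal \<eta> | \<eta>. P \<eta>} = \<infinity>"
proof (rule ccontr)
  assume "Sup {ereal \<eta> | \<eta>. P \<eta>} \<noteq> \<infinity>"
  then obtain m :: nat where m: "Sup {ereal \<eta> | \<eta>. P \<eta>} < ereal (real m)"
    using less_PInf_Ex_of_nat by blast
  have "ereal (real m) \<le> Sup {ereal \<eta> | \<eta>. P \<eta>}" using assms by (intro Sup_upper) auto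
  with m show False by simp
qed

lemma coprime_power_dvd_of_exact:
  fixes p q x y :: int
  assumes pq: "coprime p q" and q: "q \<noteq> 0"
    and exact: "(real_of_int p / real_of_int q) ^ a * real_of_int x = real_of_int y"
  shows "q ^ a dvd x"
proof -
  have "real_of_int p ^ a = (real_of_int p / real_of_int q) ^ a * real_of_int q ^ a"
    using q by (simp add: power_divide)
  hence "real_of_int (p ^ a * x) = real_of_int (q ^ a * y)"
    using exact by (simp add: mult_ac)
  hence "p ^ a * x = q ^ a * y" by (simp only: of_int_eq_iff)
  hence "q ^ a dvd p ^ a * x" by (metis dvd_triv_left)
  moreover have "coprime (q ^ a) (p ^ a)" using pq by (simp add: coprime_commute)
  ultimately show ?thesis by (simp add: coprime_dvd_mult_right_iff)
qed

text \<open>Take the first inexact coordinate \<open>i\<close>: exactness below \<open>i\<close> makes \<open>q\<^sup>i\<^sup>-\<^sup>1\<close>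
  divide \<open>v 0\<close>, so the \<open>i\<close>-th error is a nonzero integer divided by \<open>q\<close>.\<close>
lemma rational_power_gap:
  fixes p q :: int and v :: "nat \<Rightarrow> int"
  defines "r \<equiv> real_of_int p / real_of_int q"
  assumes pq: "coprime p q" and q: "q > 0"
    and inexact: "\<exists>i\<in>{1..k}. r ^ i * real_of_int (v 0) \<noteq> real_of_int (v i)"
  shows "\<exists>i\<in>{1..k}. 1 / real_of_int q \<le> \<bar>r ^ i * real_of_int (v 0) - real_of_int (v i)\<bar>"
proof -
  define P where "P i \<longleftrightarrow> i \<in> {1..k} \<and> r ^ i * real_of_int (v 0) \<noteq> real_of_int (v i)" for i
  have "\<exists>i. P i" using inexact unfolding P_def by blast
  then obtain i where i: "P i" and least: "\<And>i'. i' < i \<Longrightarrow> \<not> P i'"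
    unfolding exists_least_iff[of P] by blast
  then obtain a where a: "i = Suc a" unfolding P_def by (cases i) auto
  have "r ^ a * real_of_int (v 0) = real_of_int (v a)"
  proof (cases "a = 0")
    case False
    with least[of a] i show ?thesis unfolding a P_def by auto
  qed simp
  hence "q ^ a dvd v 0"
    using coprime_power_dvd_of_exact[OF pq] q unfolding r_def by simp
  then obtain w where w: "v 0 = q ^ a * w" by (elim dvdE)
  have "r ^ i * real_of_int (v 0) = real_of_int p ^ i * real_of_int w / real_of_int q"
    using q by (simp add: r_def a w power_divide)
  hence err: "r ^ i * real_of_int (v 0) - real_of_int (v i) = real_of_int (p ^ i * w - q * v i) / real_of_int q"
    using q by (simp add: diff_divide_distrib)
  have "p ^ i * w - q * v i \<noteq> 0"
  proof
    assume "p ^ i * w - q * v i = 0"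
    hence "r ^ i * real_of_int (v 0) - real_of_int (v i) = 0" unfolding err by simp
    thus False using i unfolding P_def by simp
  qed
  hence "1 / real_of_int q \<le> \<bar>real_of_int (p ^ i * w - q * v i)\<bar> / real_of_int q"
    using q by (intro divide_right_mono) linarith+
  also have "\<dots> = \<bar>r ^ i * real_of_int (v 0) - real_of_int (v i)\<bar>"
    using q unfolding err by (simp add: abs_divide)
  finally show ?thesis using i unfolding P_def by blast
qed

lemma exact_vector_eq_0:
  fixes p q :: int and v :: "nat \<Rightarrow> int"
  assumes pq: "coprime p q" and q: "q > 0" and k: "k \<ge> 1"
    and exact: "\<forall>i\<in>{1..k}. (real_of_int p / real_of_int q) ^ i * real_of_int (v 0) = real_of_int (v i)"
    and small: "\<bar>real_of_int (v 0)\<bar> < real_of_int q ^ k"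
  shows "\<forall>t\<le>k. v t = 0"
proof -
  obtain w where w: "v 0 = q ^ k * w"
    using coprime_power_dvd_of_exact[OF pq, of k "v 0" "v k"] exact k q by (auto elim!: dvdE)
  have "w = 0"
  proof (rule ccontr)
    assume "w \<noteq> 0"
    hence "real_of_int q ^ k * 1 \<le> real_of_int q ^ k * \<bar>real_of_int w\<bar>"
      using q by (intro mult_left_mono) auto
    thus False using small q by (simp add: w abs_mult)
  qed
  thus ?thesis using exact w by (auto simp: le_eq_less_or_eq[of 0] Suc_le_eq)
qed

section \<open>Simultaneous approximation to Veronese vectors\<close>

lemma has_indep_sols_antimono:
  assumes "has_indep_sols k j z X \<eta>'" "\<eta> \<le> \<eta>'" "X \<ge> 1"
  shows "has_indep_sols k j z X \<eta>"
proof -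
  have "X powr (- \<eta>') \<le> X powr (- \<eta>)" using assms(2,3) by (intro powr_mono) auto
  thus ?thesis using assms(1) unfolding has_indep_sols_def approx_sol_def by (meson order.trans)
qed

lemma has_indep_sols_unit_vectors:
  assumes j: "j \<le> k + 1" and X: "X \<ge> 1" and \<eta>: "\<eta> \<le> 0" and z: "0 \<le> z" "z \<le> 1"
  shows "has_indep_sols k j (veronese z) X \<eta>"
proof -
  define V where "V m t = (if t = m then 1 else (0::int))" for m t :: nat
  have Xe: "1 \<le> X powr (- \<eta>)" using X \<eta> by (simp add: ge_one_powr_ge_zero)
  have "approx_sol k (veronese z) X \<eta> (V m)" if m: "m < j" for m
    unfolding approx_sol_def
  proof (intro conjI ballI allI impI)
    show "V m i = 0" if "i > k" for i using that m j by (simp add: V_def)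
    show "\<bar>real_of_int (V m 0)\<bar> \<le> X" using X by (simp add: V_def)
  next
    fix i assume "i \<in> {1..k}"
    hence "\<bar>veronese z i * real_of_int (V m 0) - real_of_int (V m i)\<bar> \<le> 1"
      using z by (auto simp: V_def veronese_def power_le_one)
    thus "\<bar>veronese z i * real_of_int (V m 0) - real_of_int (V m i)\<bar> \<le> X powr - \<eta>"
      using Xe by linarith
  qed
  moreover have "lin_indep_int k j V"
    unfolding lin_indep_int_def
  proof (intro allI impI)
    fix c :: "nat \<Rightarrow> real" and m
    assume h: "\<forall>t\<le>k. (\<Sum>m<j. c m * real_of_int (V m t)) = 0" and m: "m < j"
    have "(\<Sum>m'<j. c m' * real_of_int (V m' m)) = (\<Sum>m'<j. if m = m' then c m' else 0)"
      by (rule sum.cong) (auto simp: V_def)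
    also have "\<dots> = c m" using m by simp
    finally show "c m = 0" using h m j by auto
  qed
  ultimately show ?thesis unfolding has_indep_sols_def by blast
qed

lemma lin_indep_intD:
  assumes "lin_indep_int k j V" "\<forall>t\<le>k. (\<Sum>m<j. c m * real_of_int (V m t)) = 0" "m < j"
  shows "c m = 0"
  using assms unfolding lin_indep_int_def by blast

lemma lin_indep_int_row_nonzero:
  assumes li: "lin_indep_int k j V" and m: "m < j"
  shows "\<exists>t\<le>k. V m t \<noteq> 0"
proof (rule ccontr)
  assume "\<not> ?thesis"
  hence "\<forall>t\<le>k. (\<Sum>m'<j. (if m' = m then 1 else 0) * real_of_int (V m' t)) = 0"
    by (auto intro!: sum.neutral)
  from lin_indep_intD[OF li this m] show False by simp
qed

lemma exact_pair_not_lin_indep: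
  fixes r :: real and V :: "nat \<Rightarrow> nat \<Rightarrow> int"
  assumes j: "j \<ge> 2"
    and exact: "\<forall>m<2. \<forall>i\<in>{1..k}. r ^ i * real_of_int (V m 0) = real_of_int (V m i)"
  shows "\<not> lin_indep_int k j V"
proof
  assume li: "lin_indep_int k j V"
  define c where "c m = (if m = 0 then real_of_int (V 1 0) else if m = 1 then - real_of_int (V 0 0) else 0)"
    for m :: nat
  have "\<forall>t\<le>k. (\<Sum>m<j. c m * real_of_int (V m t)) = 0"
  proof (intro allI impI)
    fix t assume t: "t \<le> k"
    have "(\<Sum>m<j. c m * real_of_int (V m t)) = (\<Sum>m\<in>{0, 1}. c m * real_of_int (V m t))"
      using j by (intro sum.mono_neutral_right) (auto simp: c_def)
    also have "\<dots> = 0"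
      using exact[rule_format, of 0 t, symmetric] exact[rule_format, of 1 t, symmetric] t
      by (cases "t = 0") (auto simp: c_def algebra_simps)
    finally show "(\<Sum>m<j. c m * real_of_int (V m t)) = 0" .
  qed
  from lin_indep_intD[OF li this, of 1] have "V 0 0 = 0" using j by (simp add: c_def)
  hence "V 0 t = 0" if "t \<le> k" for t
    using exact[rule_format, of 0 t, symmetric] that by (cases "t = 0") auto
  thus False using lin_indep_int_row_nonzero[OF li, of 0] j by auto
qed

lemma dirichlet_simultaneous:
  fixes z :: real and N k :: nat
  assumes N: "N \<ge> 1"
  obtains d :: nat and y :: "nat \<Rightarrow> int"
  where "1 \<le> d" "d \<le> N ^ k" "\<forall>i\<in>{1..k}. \<bar>real d * z ^ i - real_of_int (y i)\<bar> < 1 / real N"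
proof -
  define f where "f x = restrict (\<lambda>i. nat \<lfloor>real N * frac (real x * z ^ i)\<rfloor>) {1..k}" for x :: nat
  define B where "B = PiE {1..k} (\<lambda>_. {..<N})"
  have "f ` {0..N^k} \<subseteq> B"
  proof -
    have "nat \<lfloor>real N * frac (real x * z ^ i)\<rfloor> < N" for x i
    proof -
      have "real N * frac (real x * z ^ i) < real N * 1"
        using N by (intro mult_strict_left_mono) (auto simp: frac_lt_1)
      thus ?thesis using N by (simp add: floor_less_iff nat_less_iff)
    qed
    thus ?thesis unfolding B_def f_def by auto
  qed
  hence "card (f ` {0..N^k}) \<le> N ^ k"
    using card_mono[of B] by (simp add: B_def finite_PiE card_PiE)
  hence "\<not> inj_on f {0..N^k}" using card_image[of f "{0..N^k}"] by auto
  then obtain a b where ab: "a \<le> N ^ k" "b \<le> N ^ k" "a < b" and fab: "f a = f b"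
    unfolding inj_on_def by (metis atLeastAtMost_iff linorder_neq_iff)
  define y where "y i = \<lfloor>real b * z ^ i\<rfloor> - \<lfloor>real a * z ^ i\<rfloor>" for i
  have "\<bar>real (b - a) * z ^ i - real_of_int (y i)\<bar> < 1 / real N" if i: "i \<in> {1..k}" for i
  proof -
    have "nat \<lfloor>real N * frac (real a * z ^ i)\<rfloor> = nat \<lfloor>real N * frac (real b * z ^ i)\<rfloor>"
      using fun_cong[OF fab, of i] i by (simp add: f_def)
    hence "\<lfloor>real N * frac (real a * z ^ i)\<rfloor> = \<lfloor>real N * frac (real b * z ^ i)\<rfloor>"
      by (subst (asm) eq_nat_nat_iff) (simp_all add: frac_ge_0)
    hence "\<bar>real N * frac (real b * z ^ i) - real N * frac (real a * z ^ i)\<bar> < 1"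
      by linarith
    hence "real N * \<bar>frac (real b * z ^ i) - frac (real a * z ^ i)\<bar> < 1"
      by (simp add: abs_mult right_diff_distrib[symmetric])
    hence "\<bar>frac (real b * z ^ i) - frac (real a * z ^ i)\<bar> < 1 / real N"
      using N by (simp add: pos_less_divide_eq mult.commute)
    moreover have "real (b - a) * z ^ i - real_of_int (y i) = frac (real b * z ^ i) - frac (real a * z ^ i)"
      using ab by (simp add: y_def frac_def of_nat_diff algebra_simps)
    ultimately show ?thesis by simp
  qed
  moreover have "1 \<le> b - a" "b - a \<le> N ^ k" using ab by auto
  ultimately show ?thesis using that by blast
qed

lemma eventually_has_indep_sols_1:
  assumes k: "k \<ge> 1" and \<eta>: "\<eta> < 1 / real k"
  shows "\<forall>\<^sub>F X in at_top. has_indep_sols k 1 (veronese z) X \<eta>"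
proof -
  define \<eta>' where "\<eta>' = max \<eta> 0"
  have \<eta>': "\<eta>' < 1 / real k" "\<eta>' \<ge> 0" "\<eta> \<le> \<eta>'" using \<eta> k by (auto simp: \<eta>'_def)
  define e where "e = 1 / real k - \<eta>'"
  have e: "e > 0" using \<eta>' by (simp add: e_def)
  have "has_indep_sols k 1 (veronese z) X \<eta>'" if X: "X \<ge> max 1 (2 powr (1/e))" for X
  proof -
    have X1: "X \<ge> 1" using X by simp
    have "2 \<le> X powr e"
      using powr_mono2[of e "2 powr (1/e)" X] X e by (simp add: powr_powr)
    hence "2 * X powr \<eta>' \<le> X powr e * X powr \<eta>'" by (simp add: mult_right_mono)
    also have "\<dots> = X powr (1 / real k)" using X1 by (simp add: e_def powr_add[symmetric])
    finally have Xk: "2 * X powr \<eta>' \<le> X powr (1 / real k)" .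
    define N where "N = nat \<lfloor>X powr (1 / real k)\<rfloor>"
    have Xeta: "X powr \<eta>' \<ge> 1" using X1 \<eta>' by (simp add: ge_one_powr_ge_zero)
    have NX: "real N \<le> X powr (1 / real k)" using X1 by (simp add: N_def)
    have NX2: "real N \<ge> X powr \<eta>'" using Xk Xeta unfolding N_def by linarith
    hence N1: "N \<ge> 1" using Xeta by linarith
    have "real (N ^ k) \<le> (X powr (1 / real k)) ^ k" using NX by (simp add: power_mono)
    also have "\<dots> = X" using X1 k by (simp add: powr_realpow[symmetric] powr_powr)
    finally have NkX: "real (N ^ k) \<le> X" .
    have NXe: "1 / real N \<le> X powr (- \<eta>')"
      using NX2 Xeta X1 by (simp add: powr_minus divide_simps)
    obtain d :: nat and y :: "nat \<Rightarrow> int" where d: "1 \<le> d" "d \<le> N ^ k"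
      and y: "\<forall>i\<in>{1..k}. \<bar>real d * z ^ i - real_of_int (y i)\<bar> < 1 / real N"
      using dirichlet_simultaneous[OF N1, of k z] by blast
    define V where "V m t = (if t = 0 then int d else if t \<le> k then y t else 0)" for m t :: nat
    have "real d \<le> X" using NkX d(2) of_nat_mono[OF d(2)] by linarith
    moreover have "\<bar>veronese z i * real_of_int (V 0 0) - real_of_int (V 0 i)\<bar> \<le> X powr (- \<eta>')"
      if "i \<in> {1..k}" for i
      using y that NXe by (force simp: V_def veronese_def mult.commute)
    ultimately have "approx_sol k (veronese z) X \<eta>' (V 0)"
      unfolding approx_sol_def by (simp add: V_def)
    moreover have "lin_indep_int k 1 V"
      using d unfolding lin_indep_int_def by (auto simp: V_def)
    ultimately show ?thesis unfolding has_indep_sols_def by (auto intro!: exI[of _ V])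
  qed
  hence "\<forall>\<^sub>F X in at_top. has_indep_sols k 1 (veronese z) X \<eta>'"
    unfolding eventually_at_top_linorder by blast
  moreover have "\<forall>\<^sub>F X in at_top. (X::real) \<ge> 1" by (rule eventually_ge_at_top)
  ultimately show ?thesis
    by eventually_elim (rule has_indep_sols_antimono[OF _ \<eta>'(3)])
qed

lemma lin_indep_rows_prefix:
  fixes V :: "nat \<Rightarrow> nat \<Rightarrow> real"
  assumes "\<forall>c. (\<forall>t\<le>k. (\<Sum>m<Suc j. c m * V m t) = 0) \<longrightarrow> (\<forall>m<Suc j. c m = 0)"
  shows "\<forall>c. (\<forall>t\<le>k. (\<Sum>m<j. c m * V m t) = 0) \<longrightarrow> (\<forall>m<j. c m = 0)"
proof (intro allI impI)
  fix c :: "nat \<Rightarrow> real" and m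
  assume h: "\<forall>t\<le>k. (\<Sum>m<j. c m * V m t) = 0" and m: "m < j"
  define c' where "c' m = (if m < j then c m else 0)" for m
  have "\<forall>t\<le>k. (\<Sum>m<Suc j. c' m * V m t) = 0" using h by (simp add: c'_def)
  hence "c' m = 0" using assms m by simp
  thus "c m = 0" using m by (simp add: c'_def)
qed

text \<open>The columns of the minor are chosen one at a time: expanding the determinant along
  the new column gives a nontrivial linear combination of the rows, which cannot vanish
  in every column.\<close>
lemma lin_indep_nonsingular_minor:
  fixes V :: "nat \<Rightarrow> nat \<Rightarrow> real"
  assumes "\<forall>c. (\<forall>t\<le>k. (\<Sum>m<j. c m * V m t) = 0) \<longrightarrow> (\<forall>m<j. c m = 0)"
  shows "\<exists>\<sigma>. \<sigma> ` {..<j} \<subseteq> {..k} \<and> det (mat j j (\<lambda>(m,l). V m (\<sigma> l))) \<noteq> 0"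
  using assms
proof (induction j)
  case 0
  show ?case by (auto simp: det_def)
next
  case (Suc j)
  from Suc.IH[OF lin_indep_rows_prefix[OF Suc.prems]] obtain \<sigma> where \<sigma>: "\<sigma> ` {..<j} \<subseteq> {..k}"
    and d0: "det (mat j j (\<lambda>(m,l). V m (\<sigma> l))) \<noteq> 0" by blast
  define M where "M t = mat (Suc j) (Suc j) (\<lambda>(m,l). V m (if l < j then \<sigma> l else t))" for t
  have Mc: "M t \<in> carrier_mat (Suc j) (Suc j)" for t by (simp add: M_def)
  have del: "mat_delete (M t) i j = mat_delete (M 0) i j" for t i
    by (rule eq_matI) (auto simp: mat_delete_def M_def)
  define cf where "cf i = cofactor (M 0) i j" for i
  have detM: "det (M t) = (\<Sum>i<Suc j. cf i * V i t)" for t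
  proof -
    have "det (M t) = (\<Sum>i<Suc j. M t $$ (i,j) * cofactor (M t) i j)"
      by (rule laplace_expansion_column[OF Mc]) simp
    also have "\<dots> = (\<Sum>i<Suc j. cf i * V i t)"
    proof (rule sum.cong)
      fix i assume "i \<in> {..<Suc j}"
      hence "M t $$ (i,j) = V i t" by (simp add: M_def)
      moreover have "cofactor (M t) i j = cf i" unfolding cf_def cofactor_def using del[of t i] by simp
      ultimately show "M t $$ (i,j) * cofactor (M t) i j = cf i * V i t" by simp
    qed simp
    finally show ?thesis .
  qed
  have "mat_delete (M 0) j j = mat j j (\<lambda>(m,l). V m (\<sigma> l))"
    by (rule eq_matI) (auto simp: mat_delete_def M_def)
  hence "cf j \<noteq> 0" using d0 by (simp add: cf_def cofactor_def)
  hence "\<exists>t\<le>k. det (M t) \<noteq> 0" using Suc.prems by (auto simp: detM)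
  then obtain t where t: "t \<le> k" "det (M t) \<noteq> 0" by blast
  define \<sigma>' where "\<sigma>' = \<sigma>(j := t)"
  have "\<sigma>' ` {..<Suc j} \<subseteq> {..k}"
    using \<sigma> t(1) unfolding \<sigma>'_def by (auto simp: less_Suc_eq image_subset_iff)
  moreover have "mat (Suc j) (Suc j) (\<lambda>(m,l). V m (\<sigma>' l)) = M t"
    by (rule eq_matI) (auto simp: M_def \<sigma>'_def)
  ultimately show ?case using t(2) by metis
qed

lemma lin_indep_int_nonsingular_minor:
  assumes "lin_indep_int k j V"
  obtains \<sigma> where "\<sigma> ` {..<j} \<subseteq> {..k}"
    and "1 \<le> \<bar>det (mat j j (\<lambda>(m,l). real_of_int (V m (\<sigma> l))))\<bar>"
proof -
  obtain \<sigma> where \<sigma>: "\<sigma> ` {..<j} \<subseteq> {..k}"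
    and d: "det (mat j j (\<lambda>(m,l). real_of_int (V m (\<sigma> l)))) \<noteq> 0"
    using lin_indep_nonsingular_minor[where V = "\<lambda>m t. real_of_int (V m t)"] assms
    unfolding lin_indep_int_def by blast
  have "mat j j (\<lambda>(m,l). real_of_int (V m (\<sigma> l))) = of_int_hom.mat_hom (mat j j (\<lambda>(m,l). V m (\<sigma> l)))"
    by (rule eq_matI) auto
  hence det_eq: "det (mat j j (\<lambda>(m,l). real_of_int (V m (\<sigma> l))))
      = of_int (det (mat j j (\<lambda>(m,l). V m (\<sigma> l))))"
    by (simp add: of_int_hom.hom_det)
  with d have "det (mat j j (\<lambda>(m,l). V m (\<sigma> l))) \<noteq> 0" by simp
  hence "1 \<le> \<bar>det (mat j j (\<lambda>(m,l). real_of_int (V m (\<sigma> l))))\<bar>"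
    unfolding det_eq by linarith
  with \<sigma> show ?thesis using that by blast
qed

lemma abs_det_le_column_bounds:
  fixes A :: "real mat"
  assumes A: "A \<in> carrier_mat n n" and n: "n \<ge> 1"
    and b0: "\<forall>m<n. \<bar>A $$ (m,0)\<bar> \<le> b0"
    and b: "\<forall>m<n. \<forall>l<n. l \<noteq> 0 \<longrightarrow> \<bar>A $$ (m,l)\<bar> \<le> b"
  shows "\<bar>det A\<bar> \<le> fact n * (b0 * b ^ (n - 1))"
proof -
  let ?P = "{p. p permutes {0..<n}}"
  have "\<bar>det A\<bar> \<le> (\<Sum>p\<in>?P. \<bar>signof p * (\<Prod>l<n. A $$ (p l, l))\<bar>)"
    unfolding det_col[OF A] by (rule sum_abs)
  also have "\<dots> \<le> (\<Sum>p\<in>?P. b0 * b ^ (n - 1))"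
  proof (rule sum_mono)
    fix p assume "p \<in> ?P"
    hence pl: "l < n \<Longrightarrow> p l < n" for l using permutes_in_image[of p "{0..<n}" l] by simp
    have "\<bar>signof p * (\<Prod>l<n. A $$ (p l, l))\<bar> = (\<Prod>l<n. \<bar>A $$ (p l, l)\<bar>)"
      by (simp add: abs_mult sign_def abs_prod)
    also have "\<dots> \<le> (\<Prod>l<n. if l = 0 then b0 else b)"
      by (rule prod_mono) (use b0 b pl in auto)
    also have "\<dots> = b0 * b ^ (n - 1)"
    proof -
      obtain m where m: "n = Suc m" using n by (cases n) auto
      show ?thesis unfolding m by (subst prod.lessThan_Suc_shift) simp
    qed
    finally show "\<bar>signof p * (\<Prod>l<n. A $$ (p l, l))\<bar> \<le> b0 * b ^ (n - 1)" .
  qed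
  also have "\<dots> = fact n * (b0 * b ^ (n - 1))"
    by (simp add: card_permutations[of "{0..<n}" n])
  finally show ?thesis .
qed

lemma det_subtract_first_column:
  fixes A :: "real mat"
  assumes A: "A \<in> carrier_mat n n" and c0: "c 0 = 0"
  shows "det (mat n n (\<lambda>(m,l). A $$ (m,l) - c l * A $$ (m,0))) = det A"
proof -
  define U where "U = mat n n (\<lambda>(a,b). (if a = b then 1 else 0) - (if a = 0 then c b else (0::real)))"
  have U: "U \<in> carrier_mat n n" by (simp add: U_def)
  have "upper_triangular U" by (auto simp: upper_triangular_def U_def)
  hence "det U = prod_list (diag_mat U)" by (rule det_upper_triangular[OF _ U])
  also have "diag_mat U = map (\<lambda>i. 1) [0..<n]"
    by (auto simp: diag_mat_def U_def c0 intro!: map_cong)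
  finally have dU: "det U = 1" by (simp add: map_replicate_const)
  have "mat n n (\<lambda>(m,l). A $$ (m,l) - c l * A $$ (m,0)) = A * U"
  proof (rule eq_matI)
    fix m l assume "m < dim_row (A * U)" "l < dim_col (A * U)"
    hence mn: "m < n" and ln: "l < n" using A U by auto
    have "(A * U) $$ (m,l) = (\<Sum>b<n. A $$ (m,b) * U $$ (b,l))"
      using A U mn ln by (simp add: index_mult_mat scalar_prod_def atLeast0LessThan)
    also have "\<dots> = (\<Sum>b<n. (if b = l then A $$ (m,b) else 0) - (if b = 0 then c l * A $$ (m,b) else 0))"
      using ln by (intro sum.cong) (auto simp: U_def c0)
    also have "\<dots> = A $$ (m,l) - c l * A $$ (m,0)"
      using ln by (simp add: sum_subtractf sum.delta)
    finally show "mat n n (\<lambda>(m,l). A $$ (m,l) - c l * A $$ (m,0)) $$ (m,l) = (A * U) $$ (m,l)"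
      using mn ln by simp
  qed (use A U in auto)
  also have "det (A * U) = det A" using det_mult[OF A U] dU by simp
  finally show ?thesis .
qed

text \<open>Subtracting suitable multiples of the first column of a nonsingular integer minor
  of \<open>j\<close> good approximations leaves entries of size \<open>X + \<delta>\<close> in the first column
  and of size \<open>\<delta> (1 + z\<^sup>-\<^sup>k)\<close> elsewhere.\<close>
lemma det_bound_of_indep_approximations:
  fixes z X \<delta> :: real and V :: "nat \<Rightarrow> nat \<Rightarrow> int"
  assumes z: "0 < z" "z \<le> 1" and j: "j \<ge> 1" and \<delta>: "0 \<le> \<delta>"
    and sol: "\<forall>m<j. \<bar>real_of_int (V m 0)\<bar> \<le> X \<and>
      (\<forall>i\<in>{1..k}. \<bar>z ^ i * real_of_int (V m 0) - real_of_int (V m i)\<bar> \<le> \<delta>)"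
    and li: "lin_indep_int k j V"
  shows "1 \<le> fact j * ((X + \<delta>) * (\<delta> * (1 + 1 / z ^ k)) ^ (j - 1))"
proof -
  obtain \<sigma> where \<sigma>k: "\<sigma> ` {..<j} \<subseteq> {..k}"
    and det_ge: "1 \<le> \<bar>det (mat j j (\<lambda>(m,l). real_of_int (V m (\<sigma> l))))\<bar>"
    by (rule lin_indep_int_nonsingular_minor[OF li])
  have \<sigma>: "\<sigma> l \<le> k" if "l < j" for l
    using \<sigma>k that by auto
  define A where "A = mat j j (\<lambda>(m,l). real_of_int (V m (\<sigma> l)))"
  define E where "E m t = z ^ t * real_of_int (V m 0) - real_of_int (V m t)" for m t
  have E: "\<bar>E m t\<bar> \<le> \<delta>" if "m < j" "t \<le> k" for m t
    using sol \<delta> that by (cases "t = 0") (auto simp: E_def)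
  have V: "\<bar>real_of_int (V m t)\<bar> \<le> X + \<delta>" if m: "m < j" and t: "t \<le> k" for m t
    using abs_le_of_approximation[of z "real_of_int (V m 0)" X t "real_of_int (V m t)" \<delta>]
      z sol E[OF m t] m by (simp add: E_def)
  define c where "c l = (if l = 0 then 0 else z ^ \<sigma> l / z ^ \<sigma> 0)" for l
  have c: "\<bar>c l\<bar> \<le> 1 / z ^ k" for l
    using power_ratio_le[OF z \<sigma>[of 0]] j z by (simp add: c_def)
  define B where "B = mat j j (\<lambda>(m,l). A $$ (m,l) - c l * A $$ (m,0))"
  have "det B = det A"
    unfolding B_def by (rule det_subtract_first_column) (simp_all add: A_def c_def)
  moreover have "\<bar>det B\<bar> \<le> fact j * ((X + \<delta>) * (\<delta> * (1 + 1 / z ^ k)) ^ (j - 1))"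
  proof (rule abs_det_le_column_bounds[OF _ j])
    show "\<forall>m<j. \<bar>B $$ (m,0)\<bar> \<le> X + \<delta>"
    proof (intro allI impI)
      fix m assume "m < j"
      moreover have "B $$ (m,0) = real_of_int (V m (\<sigma> 0))"
        using \<open>m < j\<close> j by (simp add: B_def A_def c_def)
      ultimately show "\<bar>B $$ (m,0)\<bar> \<le> X + \<delta>" using V \<sigma> j by simp
    qed
    show "\<forall>m<j. \<forall>l<j. l \<noteq> 0 \<longrightarrow> \<bar>B $$ (m,l)\<bar> \<le> \<delta> * (1 + 1 / z ^ k)"
    proof (intro allI impI)
      fix m l assume m: "m < j" and l: "l < j" "l \<noteq> 0"
      have "B $$ (m,l) = real_of_int (V m (\<sigma> l)) - c l * real_of_int (V m (\<sigma> 0))"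
        using m l j by (simp add: B_def A_def)
      also have "\<dots> = c l * E m (\<sigma> 0) - E m (\<sigma> l)"
        using l z by (simp add: E_def c_def field_simps)
      finally have "B $$ (m,l) = c l * E m (\<sigma> 0) - E m (\<sigma> l)" .
      hence "\<bar>B $$ (m,l)\<bar> \<le> \<bar>c l\<bar> * \<bar>E m (\<sigma> 0)\<bar> + \<bar>E m (\<sigma> l)\<bar>"
        by (simp add: abs_mult[symmetric] abs_triangle_ineq4)
      also have "\<dots> \<le> 1 / z ^ k * \<delta> + \<delta>"
        using j m l \<sigma> z by (intro add_mono mult_mono c E) auto
      finally show "\<bar>B $$ (m,l)\<bar> \<le> \<delta> * (1 + 1 / z ^ k)" by (simp add: algebra_simps)
    qed
  qed (simp add: B_def)
  ultimately show ?thesis using det_ge by (simp add: A_def)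
qed

lemma not_frequently_has_indep_sols:
  fixes z \<eta> :: real
  assumes z: "0 < z" "z \<le> 1" and j: "j \<ge> 2" and \<eta>: "\<eta> > 1 / (real j - 1)"
  shows "\<not> (\<exists>\<^sub>F X in at_top. has_indep_sols k j (veronese z) X \<eta>)"
proof -
  define e where "e = \<eta> * (real j - 1) - 1"
  have j1: "real j - 1 > 0" using j by simp
  have e: "e > 0" using \<eta> j1 by (simp add: e_def field_simps)
  have "0 < 1 / (real j - 1)" using j1 by simp
  hence \<eta>0: "\<eta> > 0" using \<eta> by linarith
  define C where "C = 2 * fact j * (1 + 1 / z ^ k) ^ (j - 1)"
  have C: "C > 0" using z unfolding C_def by (intro mult_pos_pos zero_less_power add_pos_pos) auto
  have "\<not> has_indep_sols k j (veronese z) X \<eta>" if X: "X \<ge> max 1 (C powr (1/e) + 1)" for X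
  proof
    assume "has_indep_sols k j (veronese z) X \<eta>"
    then obtain V where V: "\<forall>m<j. approx_sol k (veronese z) X \<eta> (V m)" and li: "lin_indep_int k j V"
      unfolding has_indep_sols_def by blast
    have X1: "X \<ge> 1" using X by (rule order.trans[OF max.cobounded1])
    define \<delta> where "\<delta> = X powr (- \<eta>)"
    have \<delta>: "0 \<le> \<delta>" "\<delta> \<le> 1"
      unfolding \<delta>_def using X1 \<eta>0 by (simp_all add: powr_minus divide_simps ge_one_powr_ge_zero)
    have sol: "\<forall>m<j. \<bar>real_of_int (V m 0)\<bar> \<le> X \<and>
        (\<forall>i\<in>{1..k}. \<bar>z ^ i * real_of_int (V m 0) - real_of_int (V m i)\<bar> \<le> \<delta>)"
      using V by (auto simp: approx_sol_def veronese_def \<delta>_def)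
    have "1 \<le> fact j * ((X + \<delta>) * (\<delta> * (1 + 1 / z ^ k)) ^ (j - 1))"
      using j by (intro det_bound_of_indep_approximations[OF z _ \<delta>(1) sol li]) auto
    also have "\<dots> \<le> fact j * ((2 * X) * (\<delta> * (1 + 1 / z ^ k)) ^ (j - 1))"
      using \<delta> X1 z by (intro mult_left_mono mult_right_mono) auto
    also have "\<dots> = C * (X * \<delta> ^ (j - 1))"
      by (simp add: C_def power_mult_distrib)
    also have "\<delta> ^ (j - 1) = X powr (- \<eta> * (real j - 1))"
      unfolding \<delta>_def using X1 j by (simp add: powr_realpow[symmetric] powr_powr of_nat_diff)
    also have "X * X powr (- \<eta> * (real j - 1)) = X powr (- e)"
      using X1 by (simp add: powr_mult_base e_def algebra_simps)
    finally have "X powr e \<le> C" using X1 by (simp add: powr_minus divide_simps)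
    moreover have "C < X powr e"
    proof -
      have "(C powr (1/e)) powr e < X powr e"
        using X by (intro powr_less_mono2 e) auto
      thus ?thesis using C e by (simp add: powr_powr)
    qed
    ultimately show False by simp
  qed
  hence "\<forall>\<^sub>F X in at_top. \<not> has_indep_sols k j (veronese z) X \<eta>"
    unfolding eventually_at_top_linorder by blast
  thus ?thesis by (simp add: not_frequently)
qed

section \<open>The Liouville-type number and its partial sums\<close>

definition liouville_term :: "nat \<Rightarrow> real" where
  "liouville_term l = 1 / 3 ^ fact (Suc l)"

definition liouville3 :: real where
  "liouville3 = 2 * (\<Sum>l. liouville_term l)"

definition lpartial :: "nat \<Rightarrow> real" where
  "lpartial n = 2 * (\<Sum>l<n. liouville_term l)"

definition lden :: "nat \<Rightarrow> nat" where
  "lden n = 3 ^ fact n"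

definition lnum :: "nat \<Rightarrow> nat" where
  "lnum n = (\<Sum>l<n. 2 * 3 ^ (fact n - fact (Suc l)))"

lemma liouville_term_pos: "liouville_term l > 0"
  by (simp add: liouville_term_def)

lemma fact_Suc_add_le: "fact (Suc n) + m \<le> (fact (Suc (m + n)) :: nat)"
proof (induction m)
  case (Suc m)
  have "(1::nat) \<le> fact (Suc (m + n))"
    by (simp add: Suc_leI)
  hence "fact (Suc (m + n)) + (1::nat) \<le> fact (Suc (Suc m + n))"
    by (simp add: algebra_simps)
  with Suc show ?case by simp
qed simp

lemma liouville_term_le_geometric: "liouville_term (m + n) \<le> liouville_term n * (1/3) ^ m"
proof -
  have "(3::real) ^ (fact (Suc n) + m) \<le> 3 ^ fact (Suc (m + n))"
    by (rule power_increasing) (use fact_Suc_add_le in auto)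
  thus ?thesis by (simp add: liouville_term_def power_add power_one_over divide_simps)
qed

lemma summable_liouville_term_shift: "summable (\<lambda>m. liouville_term (m + n))"
proof (rule summable_comparison_test'[where N=0])
  show "summable (\<lambda>m. liouville_term n * (1/3::real) ^ m)"
    by (intro summable_mult summable_geometric) simp
  show "norm (liouville_term (m + n)) \<le> liouville_term n * (1/3) ^ m" for m
    using liouville_term_pos[of "m + n"] liouville_term_le_geometric[of m n] by simp
qed

lemma liouville3_minus_lpartial: "liouville3 - lpartial n = 2 * (\<Sum>m. liouville_term (m + n))"
  using suminf_split_initial_segment[OF summable_liouville_term_shift[of 0], of n]
  by (simp add: liouville3_def lpartial_def)

lemma lpartial_less_liouville3: "lpartial n < liouville3"
proof -
  have "0 < (\<Sum>m. liouville_term (m + n))"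
    by (rule suminf_pos[OF summable_liouville_term_shift]) (simp add: liouville_term_pos)
  thus ?thesis using liouville3_minus_lpartial[of n] by linarith
qed

lemma liouville3_minus_lpartial_le: "liouville3 - lpartial n \<le> 3 / lden (Suc n)"
proof -
  have "(\<Sum>m. liouville_term (m + n)) \<le> (\<Sum>m. liouville_term n * (1/3::real) ^ m)"
    by (intro suminf_le summable_liouville_term_shift liouville_term_le_geometric
        summable_mult summable_geometric) simp
  also have "\<dots> = liouville_term n * 3 / 2"
    by (subst suminf_mult) (auto simp: suminf_geometric)
  finally show ?thesis
    by (simp add: liouville3_minus_lpartial liouville_term_def lden_def)
qed

lemma lden_pos: "lden n > 0"
  by (simp add: lden_def)

lemma lden_Suc: "lden (Suc n) = lden n ^ Suc n"
proof -
  have "fact (Suc n) = fact n * Suc n" by simp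
  thus ?thesis unfolding lden_def by (simp only: power_mult)
qed

lemma lden_ge_3: "n \<ge> 1 \<Longrightarrow> lden n \<ge> 3"
  using power_increasing[of 1 "fact n" "3::nat"] fact_ge_1[of n, where 'a=nat]
  by (simp add: lden_def)

lemma lden_ge_self: "real n \<le> real (lden n)"
proof -
  have "n \<le> fact n" by (rule fact_ge_self)
  also have "fact n < (2::nat) ^ fact n" by (rule less_exp)
  also have "(2::nat) ^ fact n \<le> 3 ^ fact n" by (rule power_mono) auto
  finally show ?thesis by (simp add: lden_def)
qed

lemma lpartial_Suc: "lpartial (Suc n) = lpartial n + 2 / lden (Suc n)"
  by (simp add: lpartial_def lden_def liouville_term_def algebra_simps)

lemma lpartial_eq: "lpartial n = lnum n / lden n"
proof -
  have "real (lnum n) = (\<Sum>l<n. 2 * liouville_term l * lden n)"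
  proof -
    have "2 * 3 ^ (fact n - fact (Suc l)) = 2 * liouville_term l * (3::real) ^ fact n"
      if "l < n" for l
    proof -
      have "fact (Suc l) \<le> (fact n :: nat)" using that by (intro fact_mono) auto
      thus ?thesis by (simp add: liouville_term_def power_diff)
    qed
    thus ?thesis by (simp add: lnum_def lden_def mult.assoc)
  qed
  thus ?thesis using lden_pos[of n]
    by (simp add: lpartial_def sum_distrib_left sum_distrib_right mult.assoc field_simps)
qed

lemma lpartial_nonneg: "lpartial n \<ge> 0"
  by (simp add: lpartial_def sum_nonneg less_imp_le[OF liouville_term_pos])

lemma lpartial_1: "lpartial 1 = 2/3"
  by (simp add: lpartial_def liouville_term_def)

lemma liouville3_le_1: "liouville3 \<le> 1"
  using liouville3_minus_lpartial_le[of 1] lpartial_1 by (simp add: lden_def)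

lemma liouville3_ge: "2/3 \<le> liouville3"
  using lpartial_less_liouville3[of 1] lpartial_1 by simp

lemma lnum_less_lden: "lnum n < lden n"
proof -
  have "lpartial n < 1" using lpartial_less_liouville3[of n] liouville3_le_1 by simp
  hence "real (lnum n) < real (lden n)" using lden_pos[of n] by (simp add: lpartial_eq divide_simps)
  thus ?thesis by simp
qed

lemma lnum_mod_3: "n \<ge> 1 \<Longrightarrow> lnum n mod 3 = 2"
proof -
  assume "n \<ge> 1"
  then obtain m where m: "n = Suc m" by (cases n) auto
  have "3 dvd (2 * 3 ^ (fact n - fact (Suc l)) :: nat)" if "l < m" for l
  proof -
    have "fact (Suc l) < (fact n :: nat)" using that by (intro fact_less_mono) (auto simp: m)
    thus ?thesis by simp
  qed
  hence "3 dvd (\<Sum>l<m. 2 * 3 ^ (fact n - fact (Suc l)) :: nat)" by (intro dvd_sum) simp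
  moreover have "lnum n = (\<Sum>l<m. 2 * 3 ^ (fact n - fact (Suc l))) + 2"
    by (simp add: lnum_def m)
  ultimately show ?thesis by (auto elim!: dvdE) presburger
qed

lemma coprime_lnum_lden: "n \<ge> 1 \<Longrightarrow> coprime (int (lnum n)) (int (lden n))"
proof -
  assume "n \<ge> 1"
  hence "\<not> (3::int) dvd int (lnum n)"
    using lnum_mod_3 by (metis dvd_imp_mod_0 int_dvd_int_iff of_nat_numeral zero_neq_numeral)
  hence "coprime (int (lnum n)) 3"
    using prime_imp_coprime[of "3::int"] by (simp add: coprime_commute)
  thus ?thesis by (simp add: lden_def)
qed

lemma liouville3_in_cantor_set: "liouville3 \<in> cantor_set"
proof -
  define g where "g l = fact (Suc l) - (1::nat)" for l
  define d where "d i = (if i \<in> range g then 2 else 0::nat)" for i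
  have "strict_mono g"
  proof (rule strict_monoI_Suc)
    fix l
    have "fact (Suc l) < (fact (Suc (Suc l)) :: nat)" by (intro fact_less_mono) auto
    moreover have "(1::nat) \<le> fact (Suc l)" by (simp add: Suc_leI)
    ultimately show "g l < g (Suc l)" by (simp add: g_def)
  qed
  moreover have "Suc (g l) = fact (Suc l)" for l
    using fact_ge_1[of "Suc l", where 'a=nat] by (simp add: g_def)
  hence "(\<lambda>l. real (d (g l)) / 3 ^ Suc (g l)) = (\<lambda>l. 2 * liouville_term l)"
    by (auto simp: d_def liouville_term_def)
  moreover have "(\<lambda>l. 2 * liouville_term l) sums liouville3"
    using summable_liouville_term_shift[of 0]
    by (simp add: liouville3_def sums_mult summable_sums)
  ultimately have "(\<lambda>i. real (d i) / 3 ^ Suc i) sums liouville3"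
    by (subst sums_mono_reindex[symmetric, where g = g]) (auto simp: d_def)
  moreover have "\<forall>i. d i = 0 \<or> d i = 2" by (simp add: d_def)
  ultimately show ?thesis
    unfolding cantor_set_def using liouville3_le_1 liouville3_ge
    by (auto intro!: exI[of _ d] simp: sums_iff)
qed

lemma liouville3_power_close:
  "\<bar>liouville3 ^ i - lpartial n ^ i\<bar> \<le> real i * (3 / real (lden (Suc n)))"
proof -
  have "\<bar>liouville3 ^ i - lpartial n ^ i\<bar> \<le> real i * \<bar>liouville3 - lpartial n\<bar>"
    using liouville3_le_1 liouville3_ge lpartial_nonneg lpartial_less_liouville3[of n]
    by (intro abs_power_diff_le) auto
  also have "\<bar>liouville3 - lpartial n\<bar> \<le> 3 / real (lden (Suc n))"
    using liouville3_minus_lpartial_le[of n] lpartial_less_liouville3[of n] by simp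
  finally show ?thesis by (simp add: mult_left_mono)
qed

section \<open>The approximation exponents of the Liouville-type number\<close>

text \<open>For \<open>\<bar>x\<bar> \<le> X\<close> the Veronese vectors of \<open>\<zeta>\<close> and \<open>p\<^sub>n / q\<^sub>n\<close> give values of
  \<open>\<zeta>\<^sup>i x\<close> and \<open>(p\<^sub>n / q\<^sub>n)\<^sup>i x\<close> within \<open>1 / (2 q\<^sub>n)\<close>, so an inexact approximation
  to the latter would contradict the gap \<open>1 / q\<^sub>n\<close> of \<open>rational_power_gap\<close>.\<close>
lemma approx_sol_liouville3_exact:
  assumes n: "n \<ge> 1"
    and X: "6 * real k * real (lden n) * X \<le> real (lden (Suc n))"
    and \<eta>: "X powr (- \<eta>) < 1 / (2 * real (lden n))"
    and v: "approx_sol k (veronese liouville3) X \<eta> v"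
  shows "\<forall>i\<in>{1..k}. lpartial n ^ i * real_of_int (v 0) = real_of_int (v i)"
proof (rule ccontr)
  define q where "q = real (lden n)"
  have q: "q > 0" "real (lden (Suc n)) > 0" using lden_pos by (auto simp: q_def)
  have lp: "lpartial n = real_of_int (int (lnum n)) / real_of_int (int (lden n))"
    by (simp add: lpartial_eq)
  assume "\<not> ?thesis"
  then obtain i where i: "i \<in> {1..k}"
    and gap: "1 / q \<le> \<bar>lpartial n ^ i * real_of_int (v 0) - real_of_int (v i)\<bar>"
    using rational_power_gap[OF coprime_lnum_lden[OF n], of k v] lden_pos[of n]
    unfolding lp by (auto simp: q_def)
  have vX: "\<bar>real_of_int (v 0)\<bar> \<le> X" using v by (simp add: approx_sol_def)
  have "\<bar>(liouville3 ^ i - lpartial n ^ i) * real_of_int (v 0)\<bar> \<le> real i * (3 / real (lden (Suc n))) * X"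
    unfolding abs_mult by (intro mult_mono liouville3_power_close vX) auto
  also have "\<dots> \<le> real k * (3 / real (lden (Suc n))) * X"
    using i vX q by (intro mult_right_mono) auto
  also have "\<dots> \<le> 1 / (2 * q)"
    using X q by (simp add: q_def field_simps)
  finally have close: "\<bar>(liouville3 ^ i - lpartial n ^ i) * real_of_int (v 0)\<bar> \<le> 1 / (2 * q)" .
  have "\<bar>liouville3 ^ i * real_of_int (v 0) - real_of_int (v i)\<bar> \<le> X powr (- \<eta>)"
    using v i by (simp add: approx_sol_def veronese_def)
  hence "\<bar>liouville3 ^ i * real_of_int (v 0) - real_of_int (v i)\<bar> < 1 / (2 * q)"
    using \<eta> by (simp add: q_def)
  moreover have "lpartial n ^ i * real_of_int (v 0) - real_of_int (v i)
      = (liouville3 ^ i * real_of_int (v 0) - real_of_int (v i)) - (liouville3 ^ i - lpartial n ^ i) * real_of_int (v 0)"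
    by (simp add: algebra_simps)
  hence "\<bar>lpartial n ^ i * real_of_int (v 0) - real_of_int (v i)\<bar>
      \<le> \<bar>liouville3 ^ i * real_of_int (v 0) - real_of_int (v i)\<bar> + \<bar>(liouville3 ^ i - lpartial n ^ i) * real_of_int (v 0)\<bar>"
    by (metis abs_triangle_ineq4)
  moreover have "1 / (2 * q) + 1 / (2 * q) = 1 / q" by simp
  ultimately show False using close gap by linarith
qed

lemma not_has_indep_sols_1_liouville3:
  assumes n: "n \<ge> 1" and k: "k \<ge> 1"
    and X: "6 * real k * real (lden n) * X \<le> real (lden (Suc n))" "X < real (lden n) ^ k"
    and \<eta>: "X powr (- \<eta>) < 1 / (2 * real (lden n))"
  shows "\<not> has_indep_sols k 1 (veronese liouville3) X \<eta>"
proof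
  assume "has_indep_sols k 1 (veronese liouville3) X \<eta>"
  then obtain V where V: "approx_sol k (veronese liouville3) X \<eta> (V 0)" and li: "lin_indep_int k 1 V"
    unfolding has_indep_sols_def by auto
  have lp: "lpartial n = real_of_int (int (lnum n)) / real_of_int (int (lden n))"
    by (simp add: lpartial_eq)
  have exact: "\<forall>i\<in>{1..k}. lpartial n ^ i * real_of_int (V 0 0) = real_of_int (V 0 i)"
    by (rule approx_sol_liouville3_exact[OF n X(1) \<eta> V])
  have "\<bar>real_of_int (V 0 0)\<bar> \<le> X" using V by (simp add: approx_sol_def)
  hence "\<bar>real_of_int (V 0 0)\<bar> < real_of_int (int (lden n)) ^ k" using X(2) by simp
  hence "\<forall>t\<le>k. V 0 t = 0"
    using exact lden_pos[of n] unfolding lp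
    by (intro exact_vector_eq_0[OF coprime_lnum_lden[OF n] _ k]) simp_all
  thus False using lin_indep_int_row_nonzero[OF li, of 0] by auto
qed

lemma not_has_indep_sols_liouville3:
  assumes n: "n \<ge> 1" and j: "j \<ge> 2"
    and X: "6 * real k * real (lden n) * X \<le> real (lden (Suc n))"
    and \<eta>: "X powr (- \<eta>) < 1 / (2 * real (lden n))"
  shows "\<not> has_indep_sols k j (veronese liouville3) X \<eta>"
proof
  assume "has_indep_sols k j (veronese liouville3) X \<eta>"
  then obtain V where V: "\<forall>m<j. approx_sol k (veronese liouville3) X \<eta> (V m)"
    and li: "lin_indep_int k j V"
    unfolding has_indep_sols_def by auto
  have "\<forall>m<2. \<forall>i\<in>{1..k}. lpartial n ^ i * real_of_int (V m 0) = real_of_int (V m i)"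
    using approx_sol_liouville3_exact[OF n X \<eta>] V j by simp
  with exact_pair_not_lin_indep[OF j] li show False by blast
qed

lemma half_power_powr_less:
  fixes q \<eta> :: real
  assumes q: "q \<ge> 1" and e: "real k * \<eta> - 1 > 0"
    and large: "2 * 2 powr \<eta> < q powr (real k * \<eta> - 1)"
  shows "(q ^ k / 2) powr (- \<eta>) < 1 / (2 * q)"
proof -
  have "(q ^ k / 2) powr \<eta> = q powr (real k * \<eta>) / 2 powr \<eta>"
    using q by (simp add: powr_divide powr_realpow[symmetric] powr_powr)
  also have "q powr (real k * \<eta>) = q * q powr (real k * \<eta> - 1)"
    using q powr_add[of q 1 "real k * \<eta> - 1"] by simp
  finally have "(q ^ k / 2) powr \<eta> * 2 powr \<eta> = q * q powr (real k * \<eta> - 1)" by simp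
  moreover have "q * (2 * 2 powr \<eta>) < q * q powr (real k * \<eta> - 1)" using large q by simp
  ultimately have "(2 * q) * 2 powr \<eta> < (q ^ k / 2) powr \<eta> * 2 powr \<eta>" by (simp add: mult_ac)
  hence "2 * q < (q ^ k / 2) powr \<eta>" by simp
  thus ?thesis using q by (simp add: powr_minus divide_simps)
qed

lemma not_eventually_has_indep_sols_1:
  assumes k: "k \<ge> 1" and \<eta>: "\<eta> > 1 / real k"
  shows "\<not> (\<forall>\<^sub>F X in at_top. has_indep_sols k 1 (veronese liouville3) X \<eta>)"
proof -
  define e where "e = real k * \<eta> - 1"
  have e: "e > 0" using \<eta> k by (simp add: e_def field_simps)
  define A where "A = 2 * 2 powr \<eta>"
  have "\<exists>X\<ge>N. \<not> has_indep_sols k 1 (veronese liouville3) X \<eta>" for N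
  proof -
    define n where "n = max (k + 1) (max (3 * k) (max (nat \<lceil>A powr (1/e)\<rceil> + 1) (nat \<lceil>2 * N\<rceil>)))"
    have n: "n \<ge> 1" "n \<ge> k + 1" "n \<ge> 3 * k" by (auto simp: n_def)
    have nA: "real n > A powr (1/e)" and nN: "real n \<ge> 2 * N" unfolding n_def by linarith+
    define q where "q = real (lden n)"
    have qn: "q \<ge> real n" unfolding q_def by (rule lden_ge_self)
    have q1: "q \<ge> 1" using qn n by simp
    define X where "X = q ^ k / 2"
    have "q \<le> q ^ k" using power_increasing[of 1 k q] q1 k by simp
    hence XN: "X \<ge> N" using qn nN by (simp add: X_def)
    have "6 * real k * q * X = 3 * real k * q ^ (k + 1)" by (simp add: X_def)
    also have "\<dots> \<le> q * q ^ (k + 1)" using qn n q1 by (intro mult_right_mono) auto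
    also have "\<dots> = q ^ (k + 2)" by simp
    also have "\<dots> \<le> q ^ Suc n" using q1 n by (intro power_increasing) auto
    finally have XQ: "6 * real k * real (lden n) * X \<le> real (lden (Suc n))"
      by (simp add: q_def lden_Suc)
    have "(A powr (1/e)) powr e < q powr e"
      by (rule powr_less_mono2) (use nA qn e in auto)
    hence "X powr (- \<eta>) < 1 / (2 * q)"
      unfolding X_def using q1 e by (intro half_power_powr_less) (simp_all add: A_def e_def powr_powr)
    moreover have "X < real (lden n) ^ k" using q1 by (simp add: X_def q_def)
    ultimately have "\<not> has_indep_sols k 1 (veronese liouville3) X \<eta>"
      using XQ by (intro not_has_indep_sols_1_liouville3[OF n(1) k]) (simp_all add: q_def)
    thus ?thesis using XN by blast
  qed
  hence "\<exists>\<^sub>F X in at_top. \<not> has_indep_sols k 1 (veronese liouville3) X \<eta>"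
    by (rule frequently_at_topI)
  thus ?thesis by (simp add: not_eventually)
qed

lemma not_eventually_has_indep_sols:
  assumes k: "k \<ge> 1" and j: "j \<ge> 2" and \<eta>: "\<eta> > 0"
  shows "\<not> (\<forall>\<^sub>F X in at_top. has_indep_sols k j (veronese liouville3) X \<eta>)"
proof -
  have "\<exists>X\<ge>N. \<not> has_indep_sols k j (veronese liouville3) X \<eta>" for N
  proof -
    define n where "n = max 2 (max (6 * k) (max (nat \<lceil>2 / \<eta>\<rceil> + 1) (nat \<lceil>N\<rceil>)))"
    have n: "n \<ge> 1" "n \<ge> 2" "n \<ge> 6 * k" by (auto simp: n_def)
    have nE: "real n - 1 \<ge> 2 / \<eta>" and nN: "real n \<ge> N" unfolding n_def by linarith+
    define q where "q = real (lden n)"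
    have qn: "q \<ge> real n" unfolding q_def by (rule lden_ge_self)
    have q3: "q \<ge> 3" using lden_ge_3[OF n(1)] by (simp add: q_def)
    define X where "X = q ^ n / (6 * real k)"
    obtain m where m: "n = Suc m" using n by (cases n) auto
    have "6 * real k * q ^ m \<le> q * q ^ m" using qn n q3 by (intro mult_right_mono) auto
    hence Xq: "X \<ge> q ^ m" using k by (simp add: X_def m field_simps)
    have "q \<le> q ^ m" using power_increasing[of 1 m q] q3 n m by simp
    hence XN: "X \<ge> N" using Xq qn nN by linarith
    have "q * q = q powr 2" using q3 by (simp add: powr_realpow[symmetric] power2_eq_square)
    also have "\<dots> \<le> q powr (real m * \<eta>)"
      using q3 nE \<eta> m by (intro powr_mono) (auto simp: field_simps)
    also have "\<dots> = (q ^ m) powr \<eta>"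
      using q3 by (simp add: powr_realpow[symmetric] powr_powr)
    also have "\<dots> \<le> X powr \<eta>" by (rule powr_mono2) (use \<eta> Xq q3 in auto)
    finally have "q * q \<le> X powr \<eta>" .
    moreover have "2 * q < q * q" using q3 by simp
    ultimately have "2 * q < X powr \<eta>" by linarith
    hence "X powr (- \<eta>) < 1 / (2 * real (lden n))"
      using q3 by (simp add: q_def powr_minus divide_simps)
    moreover have "6 * real k * real (lden n) * X \<le> real (lden (Suc n))"
      using k by (simp add: X_def q_def lden_Suc)
    ultimately have "\<not> has_indep_sols k j (veronese liouville3) X \<eta>"
      by (rule not_has_indep_sols_liouville3[OF n(1) j, rotated])
    thus ?thesis using XN by blast
  qed
  hence "\<exists>\<^sub>F X in at_top. \<not> has_indep_sols k j (veronese liouville3) X \<eta>"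
    by (rule frequently_at_topI)
  thus ?thesis by (simp add: not_eventually)
qed

text \<open>The \<open>a\<close>-th vector is \<open>q\<^sub>n\<^sup>k T\<^sup>a\<close> times the Veronese vector of
  \<open>lpartial (n + 1) = (p\<^sub>n T + 2) / (q\<^sub>n T)\<close>, where \<open>T = q\<^sub>n\<^sup>n\<close>, with each binomial
  expansion truncated to its integral part.\<close>
definition liouville_vec :: "nat \<Rightarrow> nat \<Rightarrow> nat \<Rightarrow> nat \<Rightarrow> int" where
  "liouville_vec k n a i = (if i \<le> k then int (lden n ^ (k - i) *
      (\<Sum>s\<le>a. (i choose s) * 2 ^ s * lnum n ^ (i - s) * (lden n ^ n) ^ (a - s))) else 0)"

lemma liouville_vec_0: "real_of_int (liouville_vec k n a 0) = real (lden n) ^ k * (real (lden n) ^ n) ^ a"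
proof -
  have "(\<Sum>s\<le>a. (0 choose s) * 2 ^ s * lnum n ^ (0 - s) * (lden n ^ n) ^ (a - s)) = (lden n ^ n) ^ a"
    by (simp add: sum.atMost_shift)
  thus ?thesis by (simp add: liouville_vec_def)
qed

lemma lpartial_Suc_eq:
  "lpartial (Suc n) = (real (lnum n) * real (lden n) ^ n + 2) / (real (lden n) * real (lden n) ^ n)"
proof -
  have "lpartial (Suc n) = real (lnum n) / real (lden n) + 2 / (real (lden n) * real (lden n) ^ n)"
    by (simp add: lpartial_Suc lpartial_eq[of n] lden_Suc)
  thus ?thesis using lden_pos[of n] by (simp add: field_simps)
qed

lemma liouville_vec_close_lpartial:
  assumes n: "n \<ge> 1" and i: "i \<le> k"
  shows "\<bar>real (lden n) ^ k * (real (lden n) ^ n) ^ a * lpartial (Suc n) ^ i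
      - real_of_int (liouville_vec k n a i)\<bar> \<le> 2 ^ k * real (lden n) ^ k / real (lden n) ^ n"
proof -
  define q where "q = real (lden n)"
  define p where "p = real (lnum n)"
  define T where "T = q ^ n"
  have q3: "q \<ge> 3" using lden_ge_3[OF n] by (simp add: q_def)
  have T1: "T \<ge> 1" using q3 by (simp add: T_def one_le_power)
  have p: "0 \<le> p" "p + 2 \<le> 2 * q"
    using lnum_less_lden[of n] q3 unfolding p_def q_def by linarith+
  define E where "E = T ^ a * (p * T + 2) ^ i / T ^ i
      - (\<Sum>s\<le>a. real (i choose s) * 2 ^ s * p ^ (i - s) * T ^ (a - s))"
  have "q ^ k * T ^ a * lpartial (Suc n) ^ i - real_of_int (liouville_vec k n a i) = q ^ (k - i) * E"
  proof -
    have "q ^ k = q ^ (k - i) * q ^ i" using i by (simp add: power_add[symmetric])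
    thus ?thesis
      using i q3 T1 by (simp add: E_def liouville_vec_def lpartial_Suc_eq power_divide
          power_mult_distrib right_diff_distrib q_def p_def T_def field_simps)
  qed
  hence "\<bar>q ^ k * T ^ a * lpartial (Suc n) ^ i - real_of_int (liouville_vec k n a i)\<bar> = q ^ (k - i) * \<bar>E\<bar>"
    using q3 by (simp add: abs_mult)
  also have "\<dots> \<le> q ^ (k - i) * ((p + 2) ^ i / T)"
    using binomial_truncation_error[OF p(1) T1, of a i] q3 unfolding E_def
    by (intro mult_left_mono) auto
  also have "\<dots> \<le> q ^ (k - i) * ((2 * q) ^ i / T)"
    using p q3 T1 by (intro mult_left_mono divide_right_mono power_mono) auto
  also have "\<dots> = 2 ^ i * q ^ k / T"
    using i by (simp add: power_mult_distrib power_add[symmetric] field_simps)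
  also have "\<dots> \<le> 2 ^ k * q ^ k / T"
    using i q3 T1 by (intro divide_right_mono mult_right_mono power_increasing) auto
  finally show ?thesis by (simp add: q_def T_def)
qed

lemma liouville_vec_0_times_scale_le:
  assumes n: "n \<ge> 1" "n \<ge> k" and a: "a \<le> k"
  shows "real_of_int (liouville_vec k n a 0) * real (lden n) ^ n \<le> real (lden (Suc (Suc n)))"
proof -
  define q where "q = real (lden n)"
  have q3: "q \<ge> 3" using lden_ge_3[OF n(1)] by (simp add: q_def)
  have "real_of_int (liouville_vec k n a 0) * q ^ n \<le> q ^ k * (q ^ n) ^ (k + 1)"
    using a q3 by (simp add: liouville_vec_0 q_def[symmetric] mult.assoc power_add[symmetric])
      (intro mult_left_mono power_increasing, auto)
  also have "\<dots> = q ^ (k + n * (k + 1))" by (simp add: power_add power_mult)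
  also have "\<dots> \<le> q ^ (Suc n * Suc (Suc n))"
  proof -
    have "n * k \<le> n * n" using n(2) by (rule mult_le_mono2)
    moreover have "Suc n * Suc (Suc n) = n * n + 3 * n + 2" "n * (k + 1) = n * k + n"
      by (simp_all add: algebra_simps)
    ultimately have "k + n * (k + 1) \<le> Suc n * Suc (Suc n)" using n(2) by linarith
    thus ?thesis using q3 by (intro power_increasing) auto
  qed
  also have "\<dots> = real (lden (Suc (Suc n)))"
    unfolding q_def of_nat_power[symmetric] by (simp only: lden_Suc power_mult)
  finally show ?thesis by (simp add: q_def)
qed

lemma liouville_vec_close:
  assumes n: "n \<ge> 1" "n \<ge> k" and i: "i \<in> {1..k}" and a: "a \<le> k"
  shows "\<bar>liouville3 ^ i * real_of_int (liouville_vec k n a 0) - real_of_int (liouville_vec k n a i)\<bar>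
         \<le> (2 ^ k + 3 * real k) * real (lden n) ^ k / real (lden n) ^ n"
proof -
  define q where "q = real (lden n)"
  define T where "T = q ^ n"
  define x where "x = real_of_int (liouville_vec k n a 0)"
  have q3: "q \<ge> 3" using lden_ge_3[OF n(1)] by (simp add: q_def)
  have T1: "T \<ge> 1" using q3 by (simp add: T_def one_le_power)
  have x0: "x \<ge> 0" using q3 by (simp add: x_def liouville_vec_0 q_def[symmetric])
  have rat: "\<bar>x * lpartial (Suc n) ^ i - real_of_int (liouville_vec k n a i)\<bar> \<le> 2 ^ k * q ^ k / T"
    using liouville_vec_close_lpartial[OF n(1), of i k a] i
    by (simp add: x_def liouville_vec_0 q_def T_def)
  have "x * T \<le> real (lden (Suc (Suc n)))"
    using liouville_vec_0_times_scale_le[OF n a] by (simp add: x_def q_def T_def)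
  hence xQ: "x / real (lden (Suc (Suc n))) \<le> 1 / T"
    using T1 lden_pos[of "Suc (Suc n)"] by (auto simp: divide_simps mult.commute)
  have "\<bar>(liouville3 ^ i - lpartial (Suc n) ^ i) * x\<bar> \<le> real i * (3 / real (lden (Suc (Suc n)))) * x"
    unfolding abs_mult abs_of_nonneg[OF x0] using x0 by (intro mult_right_mono liouville3_power_close)
  also have "\<dots> = 3 * real i * (x / real (lden (Suc (Suc n))))" by simp
  also have "\<dots> \<le> 3 * real k * (q ^ k / T)"
  proof -
    have "1 / T \<le> q ^ k / T" using T1 q3 by (intro divide_right_mono one_le_power) auto
    thus ?thesis using i xQ x0 by (intro mult_mono) auto
  qed
  finally have ana: "\<bar>(liouville3 ^ i - lpartial (Suc n) ^ i) * x\<bar> \<le> 3 * real k * q ^ k / T" by simp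
  have "liouville3 ^ i * x - real_of_int (liouville_vec k n a i)
      = (x * lpartial (Suc n) ^ i - real_of_int (liouville_vec k n a i)) + (liouville3 ^ i - lpartial (Suc n) ^ i) * x"
    by (simp add: algebra_simps)
  hence "\<bar>liouville3 ^ i * x - real_of_int (liouville_vec k n a i)\<bar> \<le> 2 ^ k * q ^ k / T + 3 * real k * q ^ k / T"
    using rat ana by linarith
  thus ?thesis by (simp add: x_def q_def T_def add_divide_distrib distrib_right)
qed

lemma liouville_vec_lin_indep:
  assumes n: "n \<ge> 1" and j: "j \<le> k + 1"
  shows "lin_indep_int k j (liouville_vec k n)"
  unfolding lin_indep_int_def
proof (intro allI impI)
  fix c :: "nat \<Rightarrow> real" and m
  assume h: "\<forall>t\<le>k. (\<Sum>a<j. c a * real_of_int (liouville_vec k n a t)) = 0" and m: "m < j"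
  define q where "q = real (lden n)"
  define T where "T = q ^ n"
  have q3: "q \<ge> 3" using lden_ge_3[OF n] by (simp add: q_def)
  define u where "u s t = real (t choose s) * 2 ^ s * real (lnum n) ^ (t - s)" for s t
  define d where "d s = (\<Sum>a=s..<j. c a * T ^ (a - s))" for s
  have eq: "(\<Sum>s<j. u s t * d s) = 0" if "t < j" for t
  proof -
    have t: "t \<le> k" using that j by simp
    have W: "real_of_int (liouville_vec k n a t) = q ^ (k - t) * (\<Sum>s\<le>a. u s t * T ^ (a - s))" for a
      using t by (simp add: liouville_vec_def u_def q_def T_def)
    have "0 = (\<Sum>a<j. c a * real_of_int (liouville_vec k n a t))" using h t by simp
    also have "\<dots> = q ^ (k - t) * (\<Sum>a<j. \<Sum>s\<le>a. c a * (u s t * T ^ (a - s)))"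
      by (simp add: W sum_distrib_left mult_ac)
    also have "(\<Sum>a<j. \<Sum>s\<le>a. c a * (u s t * T ^ (a - s))) = (\<Sum>s<j. u s t * d s)"
      by (simp add: sum_triangle_swap d_def sum_distrib_left mult_ac)
    finally show ?thesis using q3 by simp
  qed
  have d0: "d s = 0" if "s < j" for s
    by (rule triangular_system_eq_0[where u = u, OF eq]) (simp_all add: u_def that)
  have "d m = c m + T * d (Suc m)"
  proof -
    have "d m = c m + (\<Sum>a=Suc m..<j. c a * T ^ (a - m))"
      using m by (simp add: d_def sum.atLeast_Suc_lessThan)
    also have "(\<Sum>a=Suc m..<j. c a * T ^ (a - m)) = T * d (Suc m)"
      unfolding d_def sum_distrib_left
    proof (rule sum.cong)
      fix a assume "a \<in> {Suc m..<j}"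
      hence "a - m = Suc (a - Suc m)" by auto
      thus "c a * T ^ (a - m) = T * (c a * T ^ (a - Suc m))" by simp
    qed simp
    finally show ?thesis .
  qed
  moreover have "d (Suc m) = 0"
    using d0 by (cases "Suc m < j") (auto simp: d_def)
  ultimately show "c m = 0" using d0[OF m] by simp
qed

lemma approx_sol_liouville_vec:
  assumes n: "n \<ge> 1" "n \<ge> k" and m: "m < j" and j: "j \<le> k + 1"
    and X: "real (lden n) ^ k * (real (lden n) ^ n) ^ (j - 1) \<le> X"
    and err: "(2 ^ k + 3 * real k) * real (lden n) ^ k / real (lden n) ^ n \<le> X powr (- \<eta>)"
  shows "approx_sol k (veronese liouville3) X \<eta> (liouville_vec k n m)"
  unfolding approx_sol_def
proof (intro conjI ballI allI impI)
  show "liouville_vec k n m i = 0" if "i > k" for i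
    using that by (simp add: liouville_vec_def)
  have "(real (lden n) ^ n) ^ m \<le> (real (lden n) ^ n) ^ (j - 1)"
    using m lden_pos[of n] by (intro power_increasing) (auto simp: one_le_power)
  thus "\<bar>real_of_int (liouville_vec k n m 0)\<bar> \<le> X"
    using X by (simp add: liouville_vec_0 order.trans[OF mult_left_mono])
  show "\<bar>veronese liouville3 i * real_of_int (liouville_vec k n m 0) - real_of_int (liouville_vec k n m i)\<bar>
      \<le> X powr - \<eta>" if "i \<in> {1..k}" for i
    using liouville_vec_close[OF n that, of m] m j err by (simp add: veronese_def)
qed

lemma frequently_has_indep_sols:
  assumes k: "k \<ge> 1" and j: "1 \<le> j" "j \<le> k + 1" and \<eta>: "\<eta> * (real j - 1) < 1"
  shows "\<exists>\<^sub>F X in at_top. has_indep_sols k j (veronese liouville3) X \<eta>"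
proof (rule frequently_at_topI)
  fix N :: real
  define \<eta>' where "\<eta>' = max \<eta> 0"
  have \<eta>': "\<eta> \<le> \<eta>'" "0 < 1 - \<eta>' * (real j - 1)"
    using \<eta> j by (auto simp: \<eta>'_def max_def)
  define C where "C = 2 ^ k + 3 * real k"
  define n where "n = max k (max (nat \<lceil>C\<rceil>) (max (nat \<lceil>N\<rceil>)
    (max (nat \<lceil>(1 + real k * (1 + \<eta>')) / (1 - \<eta>' * (real j - 1))\<rceil>) 1)))"
  have n: "n \<ge> 1" "n \<ge> k" unfolding n_def by (simp_all add: le_max_iff_disj)
  have nC: "real n \<ge> C" and nN: "real n \<ge> N"
    and margin: "real n \<ge> (1 + real k * (1 + \<eta>')) / (1 - \<eta>' * (real j - 1))"
    unfolding n_def by linarith+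
  define q where "q = real (lden n)"
  define X where "X = q ^ (k + n * (j - 1))"
  have qn: "q \<ge> real n" unfolding q_def by (rule lden_ge_self)
  have q3: "q \<ge> 3" using lden_ge_3[OF n(1)] by (simp add: q_def)
  have "q \<le> X" using q3 k unfolding X_def by (simp add: power_increasing[of 1, simplified])
  hence XN: "X \<ge> N" and X1: "X \<ge> 1" using qn nN q3 by linarith+
  have "has_indep_sols k j (veronese liouville3) X \<eta>'"
    unfolding has_indep_sols_def
  proof (intro exI conjI allI impI)
    show "lin_indep_int k j (liouville_vec k n)" by (rule liouville_vec_lin_indep[OF n(1) j(2)])
    have "C * q ^ k / q ^ n \<le> X powr (- \<eta>')"
      unfolding X_def using q3 nC qn j \<eta>'(2) margin
      by (intro powr_error_le) (auto simp: field_simps)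
    thus "approx_sol k (veronese liouville3) X \<eta>' (liouville_vec k n m)" if "m < j" for m
      using that j by (intro approx_sol_liouville_vec[OF n])
        (auto simp: X_def q_def C_def power_add power_mult)
  qed
  thus "\<exists>X\<ge>N. has_indep_sols k j (veronese liouville3) X \<eta>"
    using XN has_indep_sols_antimono[OF _ \<eta>'(1) X1] by blast
qed

lemma lambda_kj_liouville3:
  assumes k: "k \<ge> 1" and j: "j \<in> {1..k+1}"
  shows "lambda_kj k j (veronese liouville3) = (if j = 1 then \<infinity> else ereal (1 / (real j - 1)))"
proof (cases "j = 1")
  case True
  have "Sup {ereal \<eta> | \<eta>. \<exists>\<^sub>F X in at_top. has_indep_sols k j (veronese liouville3) X \<eta>} = \<infinity>"
    using True k by (intro Sup_ereal_eq_PInf frequently_has_indep_sols) auto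
  thus ?thesis using True by (simp add: lambda_kj_def)
next
  case False
  hence j2: "j \<ge> 2" using j by auto
  have "Sup {ereal \<eta> | \<eta>. \<exists>\<^sub>F X in at_top. has_indep_sols k j (veronese liouville3) X \<eta>}
      = ereal (1 / (real j - 1))"
  proof (rule Sup_ereal_eq_threshold)
    show "\<exists>\<^sub>F X in at_top. has_indep_sols k j (veronese liouville3) X \<eta>" if "\<eta> < 1 / (real j - 1)" for \<eta>
      using that j j2 by (intro frequently_has_indep_sols[OF k]) (auto simp: field_simps)
    show "\<not> (\<exists>\<^sub>F X in at_top. has_indep_sols k j (veronese liouville3) X \<eta>)" if "\<eta> > 1 / (real j - 1)" for \<eta>
      using liouville3_ge liouville3_le_1 j2 that by (intro not_frequently_has_indep_sols) auto
  qed
  thus ?thesis using False by (simp add: lambda_kj_def)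
qed

lemma lambda_hat_kj_1_liouville3:
  assumes k: "k \<ge> 1"
  shows "lambda_hat_kj k 1 (veronese liouville3) = ereal (1 / real k)"
  unfolding lambda_hat_kj_def
proof (rule Sup_ereal_eq_threshold)
  show "\<forall>\<^sub>F X in at_top. has_indep_sols k 1 (veronese liouville3) X \<eta>" if "\<eta> < 1 / real k" for \<eta>
    using eventually_has_indep_sols_1[OF k that] .
  show "\<not> (\<forall>\<^sub>F X in at_top. has_indep_sols k 1 (veronese liouville3) X \<eta>)" if "\<eta> > 1 / real k" for \<eta>
    using not_eventually_has_indep_sols_1[OF k that] .
qed

lemma lambda_hat_kj_liouville3:
  assumes k: "k \<ge> 1" and j: "j \<in> {2..k+1}"
  shows "lambda_hat_kj k j (veronese liouville3) = 0"
proof -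
  have "Sup {ereal \<eta> | \<eta>. \<forall>\<^sub>F X in at_top. has_indep_sols k j (veronese liouville3) X \<eta>} = ereal 0"
  proof (rule Sup_ereal_eq_threshold)
    show "\<forall>\<^sub>F X in at_top. has_indep_sols k j (veronese liouville3) X \<eta>" if "\<eta> < 0" for \<eta>
      using eventually_ge_at_top[of "1::real"]
    proof eventually_elim
      case (elim X)
      show ?case
        using j elim that liouville3_ge liouville3_le_1 by (intro has_indep_sols_unit_vectors) auto
    qed
    show "\<not> (\<forall>\<^sub>F X in at_top. has_indep_sols k j (veronese liouville3) X \<eta>)" if "\<eta> > 0" for \<eta>
      using j that by (intro not_eventually_has_indep_sols[OF k]) auto
  qed
  thus ?thesis by (simp add: lambda_hat_kj_def zero_ereal_def)
qed

theorem corollary15: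
  fixes \<zeta> :: real
  assumes "\<zeta> = 2 * (\<Sum>l. 1 / 3 ^ fact (Suc l))"
  shows "\<zeta> \<in> cantor_set \<and>
    (\<forall>k::nat. k \<ge> 1 \<longrightarrow>
      (\<forall>j\<in>{1..k+1}. lambda_kj k j (veronese \<zeta>) =
          (if j = 1 then \<infinity> else ereal (1 / (real j - 1)))) \<and>
      lambda_hat_kj k 1 (veronese \<zeta>) = ereal (1 / real k) \<and>
      (\<forall>j\<in>{2..k+1}. lambda_hat_kj k j (veronese \<zeta>) = 0))"
proof -
  have "\<zeta> = liouville3" using assms by (simp add: liouville3_def liouville_term_def)
  thus ?thesis
    using liouville3_in_cantor_set lambda_kj_liouville3 lambda_hat_kj_1_liouville3
      lambda_hat_kj_liouville3 by simp
qed

end
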